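(* Let $\alpha>-1$ and let $\phi(w)=aw+b$ with $a>0$ and $\mathrm{Re}(b)=0$ (so $C_\phi$ is invertible on $\mathcal{A}^2_\alpha(\mathbb{C}_+)$). The following are equivalent: (i) $C_\phi$ is uniformly expansive on $\mathcal{A}^2_\alpha(\mathbb{C}_+)$; (ii) $C_\phi$ is expansive on $\mathcal{A}^2_\alpha(\mathbb{C}_+)$; (iii) $a\neq 1$.
   Context: $\mathbb{C}_+=\{z\in\mathbb{C}:\mathrm{Re}(z)>0\}$. For $\alpha>-1$, $\mathcal{A}^2_\alpha(\mathbb{C}_+)$ is the Hilbert space of analytic $f:\mathbb{C}_+\to\mathbb{C}$ with $\|f\|^2=\frac{1}{\pi}\int_{-\infty}^{\infty}\int_0^\infty |f(x+iy)|^2x^\alpha\,dx\,dy<\infty$. $C_\phi f=f\circ\phi$ is the composition operator. An invertible bounded operator $T$ on a Banach space $X$ is expansive if for each $x\in X$ with $\|x\|=1$ there is $n\in\mathbb{Z}$ with $\|T^nx\|\ge 2$; it is uniformly expansive if there exists $n\in\mathbb{N}$ such that for each $x$ with $\|x\|=1$, $\|T^nx\|\ge 2$ or $\|T^{-n}x\|\ge 2$. *)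

theory Defs
  imports "HOL-Analysis.Analysis"
begin

definition rhp :: "complex set" where
  "rhp = {z. 0 < Re z}"

definition bergman_sqnorm :: "real \<Rightarrow> (complex \<Rightarrow> complex) \<Rightarrow> ennreal" where
  "bergman_sqnorm \<alpha> f =
     ennreal (1 / pi) *
     (\<integral>\<^sup>+ y. (\<integral>\<^sup>+ x. indicator {0<..} x * ennreal ((cmod (f (Complex x y)))\<^sup>2 * x powr \<alpha>) \<partial>lborel) \<partial>lborel)"

definition bergman_space :: "real \<Rightarrow> (complex \<Rightarrow> complex) set" where
  "bergman_space \<alpha> = {f. f analytic_on rhp \<and> bergman_sqnorm \<alpha> f < \<infinity>}"

definition bergman_norm :: "real \<Rightarrow> (complex \<Rightarrow> complex) \<Rightarrow> real" where
  "bergman_norm \<alpha> f = sqrt (enn2real (bergman_sqnorm \<alpha> f))"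

definition comp_op :: "(complex \<Rightarrow> complex) \<Rightarrow> (complex \<Rightarrow> complex) \<Rightarrow> (complex \<Rightarrow> complex)" where
  "comp_op \<phi> f = f \<circ> \<phi>"

definition expansive :: "'a set \<Rightarrow> ('a \<Rightarrow> real) \<Rightarrow> ('a \<Rightarrow> 'a) \<Rightarrow> bool" where
  "expansive X N T \<longleftrightarrow>
     (\<forall>x\<in>X. N x = 1 \<longrightarrow>
        (\<exists>n::nat. N ((T ^^ n) x) \<ge> 2 \<or> N ((inv_into X T ^^ n) x) \<ge> 2))"

definition uniformly_expansive :: "'a set \<Rightarrow> ('a \<Rightarrow> real) \<Rightarrow> ('a \<Rightarrow> 'a) \<Rightarrow> bool" where
  "uniformly_expansive X N T \<longleftrightarrow>
     (\<exists>n::nat. n \<ge> 1 \<and> (\<forall>x\<in>X. N x = 1 \<longrightarrow>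
        N ((T ^^ n) x) \<ge> 2 \<or> N ((inv_into X T ^^ n) x) \<ge> 2))"

end

theory Submission
  imports Defs "HOL-Probability.Sinc_Integral"
begin

text \<open>The substitution \<open>w = a w' + b\<close> has Jacobian \<open>a\<^sup>2\<close> and rescales the weight \<open>x\<^sup>\<alpha>\<close>
  by \<open>a\<^sup>\<alpha>\<close>, so \<open>C\<^sub>\<phi>\<close> multiplies every norm by exactly \<open>a\<^bsup>-(\<alpha>+2)/2\<^esup>\<close>; its inverse is the
  composition operator of \<open>w/a - b/a\<close>, which multiplies norms by \<open>a\<^bsup>(\<alpha>+2)/2\<^esup>\<close>. Hence the
  norms along an orbit grow geometrically in one time direction when \<open>a \<noteq> 1\<close>, uniformly in the
  starting vector, while for \<open>a = 1\<close> the operator is an isometry and no unit vector of the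
  (nonzero) space is ever expanded.\<close>

text \<open>The Bergman integrand of an arbitrary function need not be measurable, so scaling and
  affine substitution are lifted from the measurable case through measurable minorants.\<close>

lemma nn_integral_le_if_measurable_minorants:
  fixes c :: ennreal
  assumes "\<And>g. g \<in> borel_measurable M \<Longrightarrow> (\<And>x. g x \<le> f x) \<Longrightarrow> c * integral\<^sup>N M g \<le> B"
  shows "c * integral\<^sup>N M f \<le> B"
proof -
  have "c * integral\<^sup>N M f = (SUP g \<in> {g. simple_function M g \<and> g \<le> f}. c * integral\<^sup>S M g)"
    unfolding nn_integral_def by (rule SUP_mult_left_ennreal)
  also have "\<dots> \<le> B"
  proof (rule SUP_least)
    fix g assume "g \<in> {g. simple_function M g \<and> g \<le> f}"
    then show "c * integral\<^sup>S M g \<le> B"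
      using assms[of g] by (simp add: nn_integral_eq_simple_integral borel_measurable_simple_function le_fun_def)
  qed
  finally show ?thesis .
qed

lemma nn_integral_cmult_pos:
  fixes r :: real
  assumes r: "r > 0"
  shows "(\<integral>\<^sup>+x. ennreal r * f x \<partial>M) = ennreal r * integral\<^sup>N M f"
proof -
  have le: "ennreal s * integral\<^sup>N M h \<le> (\<integral>\<^sup>+x. ennreal s * h x \<partial>M)" for s :: real and h
  proof (rule nn_integral_le_if_measurable_minorants)
    fix g assume "g \<in> borel_measurable M" and "\<And>x. g x \<le> h x"
    then show "ennreal s * integral\<^sup>N M g \<le> (\<integral>\<^sup>+x. ennreal s * h x \<partial>M)"
      by (simp add: nn_integral_cmult[symmetric] nn_integral_mono mult_left_mono)
  qed
  have "ennreal r * (ennreal (1/r) * (\<integral>\<^sup>+x. ennreal r * f x \<partial>M))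
      \<le> ennreal r * (\<integral>\<^sup>+x. ennreal (1/r) * (ennreal r * f x) \<partial>M)"
    by (intro mult_left_mono le) simp
  then have "(\<integral>\<^sup>+x. ennreal r * f x \<partial>M) \<le> ennreal r * integral\<^sup>N M f"
    using r by (simp add: mult.assoc[symmetric] ennreal_mult[symmetric])
  then show ?thesis using le[of r f] by (rule antisym)
qed

lemma nn_integral_real_affine_le:
  fixes c t :: real
  assumes c: "c \<noteq> 0"
  shows "ennreal \<bar>c\<bar> * (\<integral>\<^sup>+x. f (t + c * x) \<partial>lborel) \<le> (\<integral>\<^sup>+x. f x \<partial>lborel)"
proof (rule nn_integral_le_if_measurable_minorants)
  fix g assume "g \<in> borel_measurable lborel" and g_le: "\<And>x. g x \<le> f (t + c * x)"
  define g' where "g' y = g ((y - t) / c)" for y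
  have "g' \<in> borel_measurable borel"
    unfolding g'_def by (rule measurable_compose[of _ _ borel]) (use \<open>g \<in> _\<close> in simp_all)
  then have "(\<integral>\<^sup>+x. g' x \<partial>lborel) = ennreal \<bar>c\<bar> * (\<integral>\<^sup>+x. g' (t + c * x) \<partial>lborel)"
    using c by (rule nn_integral_real_affine)
  also have "(\<lambda>x. g' (t + c * x)) = g"
    using c by (auto simp: g'_def)
  finally have "ennreal \<bar>c\<bar> * integral\<^sup>N lborel g = (\<integral>\<^sup>+x. g' x \<partial>lborel)" ..
  also have "\<dots> \<le> (\<integral>\<^sup>+x. f x \<partial>lborel)"
    using c g_le[of "(_ - t) / c"] by (intro nn_integral_mono) (simp add: g'_def)
  finally show "ennreal \<bar>c\<bar> * integral\<^sup>N lborel g \<le> (\<integral>\<^sup>+x. f x \<partial>lborel)" .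
qed

lemma nn_integral_real_affine_nonmeasurable:
  fixes c t :: real
  assumes c: "c \<noteq> 0"
  shows "(\<integral>\<^sup>+x. f x \<partial>lborel) = ennreal \<bar>c\<bar> * (\<integral>\<^sup>+x. f (t + c * x) \<partial>lborel)"
proof (rule antisym)
  have "ennreal \<bar>1/c\<bar> * integral\<^sup>N lborel f
      = ennreal \<bar>1/c\<bar> * (\<integral>\<^sup>+x. (\<lambda>x. f (t + c * x)) (- t / c + 1 / c * x) \<partial>lborel)"
    using c by (simp add: field_simps)
  also have "\<dots> \<le> (\<integral>\<^sup>+x. f (t + c * x) \<partial>lborel)"
    using c by (intro nn_integral_real_affine_le) simp
  finally have "ennreal \<bar>c\<bar> * (ennreal \<bar>1/c\<bar> * integral\<^sup>N lborel f)
      \<le> ennreal \<bar>c\<bar> * (\<integral>\<^sup>+x. f (t + c * x) \<partial>lborel)"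
    by (rule mult_left_mono) simp
  then show "integral\<^sup>N lborel f \<le> ennreal \<bar>c\<bar> * (\<integral>\<^sup>+x. f (t + c * x) \<partial>lborel)"
    using c by (simp add: mult.assoc[symmetric] ennreal_mult[symmetric] abs_mult[symmetric])
qed (rule nn_integral_real_affine_le[OF c])

lemma nn_integral_real_affine_pos:
  fixes c :: real
  assumes c: "c > 0"
  shows "(\<integral>\<^sup>+x. f (t + c * x) \<partial>lborel) = ennreal (1 / c) * (\<integral>\<^sup>+x. f x \<partial>lborel)"
  using c by (simp add: nn_integral_real_affine_nonmeasurable[of c f t] mult.assoc[symmetric]
      ennreal_mult[symmetric])

lemma bergman_sqnorm_cmult:
  fixes c :: complex
  assumes "c \<noteq> 0"
  shows "bergman_sqnorm \<alpha> (\<lambda>z. c * f z) = ennreal ((cmod c)\<^sup>2) * bergman_sqnorm \<alpha> f"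
proof -
  have c: "(cmod c)\<^sup>2 > 0" using assms by simp
  have integrand: "indicator {0<..} x * ennreal ((cmod (c * f (Complex x y)))\<^sup>2 * x powr \<alpha>)
     = ennreal ((cmod c)\<^sup>2) * (indicator {0<..} x * ennreal ((cmod (f (Complex x y)))\<^sup>2 * x powr \<alpha>))" for x y
    by (simp add: norm_mult power_mult_distrib ennreal_mult mult_ac)
  show ?thesis
    unfolding bergman_sqnorm_def nn_integral_cmult_pos[OF c] integrand by (simp only: mult_ac)
qed

lemma bergman_norm_cmult:
  fixes c :: complex
  assumes "c \<noteq> 0"
  shows "bergman_norm \<alpha> (\<lambda>z. c * f z) = cmod c * bergman_norm \<alpha> f"
  using assms by (simp add: bergman_norm_def bergman_sqnorm_cmult enn2real_mult real_sqrt_mult)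

lemma bergman_sqnorm_comp_affine:
  fixes a :: real and b :: complex
  assumes a: "a > 0" and b: "Re b = 0"
  shows "bergman_sqnorm \<alpha> (f \<circ> (\<lambda>w. of_real a * w + b)) = ennreal (a powr (-(\<alpha>+2))) * bergman_sqnorm \<alpha> f"
proof -
  define F where "F y x = indicator {0<..} x * ennreal ((cmod (f (Complex x y)))\<^sup>2 * x powr \<alpha>)" for y x
  define I where "I y = (\<integral>\<^sup>+x. F y x \<partial>lborel)" for y
  have integrand: "indicator {0<..} x * ennreal ((cmod ((f \<circ> (\<lambda>w. of_real a * w + b)) (Complex x y)))\<^sup>2 * x powr \<alpha>)
      = ennreal (a powr (-\<alpha>)) * F (Im b + a * y) (0 + a * x)" for x y
  proof (cases "x > 0")
    case True
    have "of_real a * Complex x y + b = Complex (a * x) (Im b + a * y)"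
      using b by (simp add: complex_eq_iff)
    moreover have "a powr (-\<alpha>) * (a * x) powr \<alpha> = x powr \<alpha>"
      using a True by (simp add: powr_mult powr_minus)
    ultimately show ?thesis
      using a True by (simp add: F_def ennreal_mult[symmetric] mult_ac)
  next
    case False
    then show ?thesis using a by (simp add: F_def zero_less_mult_iff)
  qed
  have "bergman_sqnorm \<alpha> (f \<circ> (\<lambda>w. of_real a * w + b))
      = ennreal (1/pi) * (\<integral>\<^sup>+y. ennreal (a powr (-\<alpha>)) * (ennreal (1/a) * I (Im b + a * y)) \<partial>lborel)"
    unfolding bergman_sqnorm_def integrand I_def
    using a by (simp only: nn_integral_cmult_pos powr_gt_zero nn_integral_real_affine_pos)
  also have "\<dots> = ennreal (1/pi) * (\<integral>\<^sup>+y. ennreal (a powr (-\<alpha>) / a) * I (Im b + a * y) \<partial>lborel)"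
    using a by (simp add: mult.assoc[symmetric] ennreal_mult[symmetric])
  also have "\<dots> = ennreal (1/pi) * (ennreal (a powr (-\<alpha>) / a) * (ennreal (1/a) * (\<integral>\<^sup>+y. I y \<partial>lborel)))"
    using a by (simp only: nn_integral_cmult_pos nn_integral_real_affine_pos divide_pos_pos powr_gt_zero)
  also have "\<dots> = ennreal (a powr (-\<alpha>) / a * (1/a)) * (ennreal (1/pi) * (\<integral>\<^sup>+y. I y \<partial>lborel))"
    using a by (simp add: ennreal_mult'[symmetric] mult_ac)
  also have "a powr (-\<alpha>) / a * (1/a) = a powr (-\<alpha> - 2)"
    using a by (simp add: powr_diff power2_eq_square)
  finally show ?thesis
    by (simp add: bergman_sqnorm_def F_def I_def)
qed

lemma bergman_norm_comp_affine:
  fixes a :: real and b :: complex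
  assumes "a > 0" and "Re b = 0"
  shows "bergman_norm \<alpha> (comp_op (\<lambda>w. of_real a * w + b) f) = a powr (-(\<alpha>+2)/2) * bergman_norm \<alpha> f"
  using assms
  by (simp add: bergman_norm_def comp_op_def bergman_sqnorm_comp_affine enn2real_mult real_sqrt_mult
      powr_half_sqrt_powr)

lemma comp_affine_in_bergman_space:
  fixes a :: real and b :: complex
  assumes a: "a > 0" and b: "Re b = 0" and f: "f \<in> bergman_space \<alpha>"
  shows "comp_op (\<lambda>w. of_real a * w + b) f \<in> bergman_space \<alpha>"
proof -
  have "f analytic_on rhp" and fin: "bergman_sqnorm \<alpha> f < \<infinity>"
    using f by (auto simp: bergman_space_def)
  moreover have "of_real a * w + b \<in> rhp" if "w \<in> rhp" for w
    using a b that by (simp add: rhp_def)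
  ultimately have "f \<circ> (\<lambda>w. of_real a * w + b) analytic_on rhp"
    by (intro analytic_on_compose_gen[of _ rhp f rhp] analytic_intros)
  moreover have "bergman_sqnorm \<alpha> (f \<circ> (\<lambda>w. of_real a * w + b)) < \<infinity>"
    using fin by (simp add: bergman_sqnorm_comp_affine[OF a b] ennreal_mult_less_top)
  ultimately show ?thesis by (simp add: bergman_space_def comp_op_def)
qed

lemma inv_into_comp_op:
  assumes "\<And>w. \<phi> (\<psi> w) = w" and "\<And>w. \<psi> (\<phi> w) = w" and "comp_op \<psi> g \<in> X"
  shows "inv_into X (comp_op \<phi>) g = comp_op \<psi> g"
proof (rule inv_into_f_eq)
  show "inj_on (comp_op \<phi>) X"
    by (rule inj_on_inverseI[of _ "comp_op \<psi>"]) (simp add: comp_op_def o_def assms(1))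
qed (use assms in \<open>simp_all add: comp_op_def o_def\<close>)

lemma inv_into_comp_affine:
  fixes a :: real and b :: complex
  assumes a: "a > 0" and b: "Re b = 0" and g: "g \<in> bergman_space \<alpha>"
  shows "inv_into (bergman_space \<alpha>) (comp_op (\<lambda>w. of_real a * w + b)) g
       = comp_op (\<lambda>w. of_real (1/a) * w + (- b / of_real a)) g"
proof (rule inv_into_comp_op)
  show "comp_op (\<lambda>w. of_real (1/a) * w + (- b / of_real a)) g \<in> bergman_space \<alpha>"
    using a b g by (intro comp_affine_in_bergman_space) auto
qed (use a in \<open>simp_all add: field_simps\<close>)

lemma funpow_norm_scaling:
  fixes N :: "'a \<Rightarrow> real"
  assumes "\<And>x. x \<in> X \<Longrightarrow> S x \<in> X \<and> N (S x) = q * N x" and "x \<in> X"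
  shows "(S ^^ n) x \<in> X \<and> N ((S ^^ n) x) = q ^ n * N x"
  using assms(2) by (induction n) (simp_all add: assms(1))

lemma uniformly_expansive_imp_expansive:
  "uniformly_expansive X N T \<Longrightarrow> expansive X N T"
  unfolding uniformly_expansive_def expansive_def by blast

lemma uniformly_expansive_if_scaling_gt_one:
  fixes q r :: real
  assumes T: "\<And>x. x \<in> X \<Longrightarrow> T x \<in> X \<and> N (T x) = q * N x"
    and T_inv: "\<And>x. x \<in> X \<Longrightarrow> inv_into X T x \<in> X \<and> N (inv_into X T x) = r * N x"
    and "q > 1 \<or> r > 1"
  shows "uniformly_expansive X N T"
proof -
  have large_power: "\<exists>n::nat. n \<ge> 1 \<and> 2 \<le> s ^ n" if "s > 1" for s :: real
  proof -
    obtain n where n: "2 < s ^ n" using real_arch_pow[OF \<open>s > 1\<close>] by blast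
    then have "n \<ge> 1" by (cases n) auto
    with n show ?thesis by (intro exI[of _ n]) auto
  qed
  from \<open>q > 1 \<or> r > 1\<close> show ?thesis
  proof
    assume "q > 1"
    then obtain n :: nat where "n \<ge> 1" "2 \<le> q ^ n" using large_power by blast
    then show ?thesis
      unfolding uniformly_expansive_def using funpow_norm_scaling[of X T N q] T
      by (intro exI[of _ n]) auto
  next
    assume "r > 1"
    then obtain n :: nat where "n \<ge> 1" "2 \<le> r ^ n" using large_power by blast
    then show ?thesis
      unfolding uniformly_expansive_def using funpow_norm_scaling[of X "inv_into X T" N r] T_inv
      by (intro exI[of _ n]) auto
  qed
qed

lemma scaling_gt_one_if_expansive:
  fixes q r :: real
  assumes T: "\<And>x. x \<in> X \<Longrightarrow> T x \<in> X \<and> N (T x) = q * N x"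
    and T_inv: "\<And>x. x \<in> X \<Longrightarrow> inv_into X T x \<in> X \<and> N (inv_into X T x) = r * N x"
    and "q \<ge> 0" and "r \<ge> 0" and unit: "\<exists>x\<in>X. N x = 1"
    and expansive: "expansive X N T"
  shows "q > 1 \<or> r > 1"
proof (rule ccontr)
  assume "\<not> (q > 1 \<or> r > 1)"
  then have small: "q ^ n \<le> 1" "r ^ n \<le> 1" for n :: nat
    using \<open>q \<ge> 0\<close> \<open>r \<ge> 0\<close> by (simp_all add: power_le_one)
  obtain x where x: "x \<in> X" "N x = 1" using unit by blast
  then obtain n where "2 \<le> N ((T ^^ n) x) \<or> 2 \<le> N ((inv_into X T ^^ n) x)"
    using expansive unfolding expansive_def by blast
  then show False
    using small[of n] x funpow_norm_scaling[of X T N q x n] funpow_norm_scaling[of X "inv_into X T" N r x n]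
      T T_inv
    by auto
qed

lemma bergman_comp_affine_scaling:
  fixes a :: real and b :: complex
  assumes "a > 0" and "Re b = 0" and "f \<in> bergman_space \<alpha>"
  shows "comp_op (\<lambda>w. of_real a * w + b) f \<in> bergman_space \<alpha> \<and>
    bergman_norm \<alpha> (comp_op (\<lambda>w. of_real a * w + b) f) = a powr (-(\<alpha>+2)/2) * bergman_norm \<alpha> f"
  using assms by (simp add: comp_affine_in_bergman_space bergman_norm_comp_affine)

lemma bergman_inv_comp_affine_scaling:
  fixes a :: real and b :: complex
  assumes a: "a > 0" and b: "Re b = 0" and f: "f \<in> bergman_space \<alpha>"
  defines "T \<equiv> comp_op (\<lambda>w. of_real a * w + b)"
  shows "inv_into (bergman_space \<alpha>) T f \<in> bergman_space \<alpha> \<and>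
    bergman_norm \<alpha> (inv_into (bergman_space \<alpha>) T f) = (1/a) powr (-(\<alpha>+2)/2) * bergman_norm \<alpha> f"
  unfolding T_def inv_into_comp_affine[OF a b f]
  using a b f by (intro bergman_comp_affine_scaling) auto

lemma nn_integral_inverse_1_plus_square_finite:
  "(\<integral>\<^sup>+y. ennreal (1 / (1 + y\<^sup>2)) \<partial>lborel) < \<infinity>"
proof -
  have "integrable lborel (\<lambda>y::real. inverse (1 + y\<^sup>2))"
    using integrable_inverse_1_plus_square by (simp add: set_integrable_def einterval_eq_UNIV)
  then show ?thesis
    by (simp add: integrable_iff_bounded divide_inverse add_pos_nonneg)
qed

definition damped_cauchy_kernel :: "complex \<Rightarrow> complex" where
  "damped_cauchy_kernel z = exp (- z / 2) / (z + 1)"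

lemma damped_cauchy_kernel_analytic: "damped_cauchy_kernel analytic_on rhp"
proof -
  have "z + 1 \<noteq> 0" if "z \<in> rhp" for z
    using that by (auto simp: rhp_def complex_eq_iff)
  then show ?thesis
    unfolding damped_cauchy_kernel_def by (auto intro!: analytic_intros)
qed

lemma norm_damped_cauchy_kernel_sq:
  "(cmod (damped_cauchy_kernel (Complex x y)))\<^sup>2 = exp (- x) / ((x + 1)\<^sup>2 + y\<^sup>2)"
proof -
  have "Complex x y + 1 = Complex (x + 1) y"
    by (simp add: complex_eq_iff)
  moreover have "(exp (- x / 2))\<^sup>2 = exp (- x)"
    by (simp add: power2_eq_square mult_exp_exp)
  ultimately show ?thesis
    by (simp add: damped_cauchy_kernel_def norm_divide power_divide norm_exp_eq_Re cmod_power2)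
qed

lemma bergman_sqnorm_damped_cauchy_kernel_finite:
  assumes "\<alpha> > -1"
  shows "bergman_sqnorm \<alpha> damped_cauchy_kernel < \<infinity>"
proof -
  define P where "P y = ennreal (1 / (1 + y\<^sup>2))" for y :: real
  define Q where "Q x = ennreal (indicator {0..} x * x powr (\<alpha> + 1 - 1) / exp x)" for x :: real
  have bound: "indicator {0<..} x * ennreal ((cmod (damped_cauchy_kernel (Complex x y)))\<^sup>2 * x powr \<alpha>)
      \<le> P y * Q x" for x y
  proof (cases "x > 0")
    case True
    then have "exp (- x) / ((x + 1)\<^sup>2 + y\<^sup>2) \<le> exp (- x) / (1 + y\<^sup>2)"
      by (intro divide_left_mono) (auto simp: add_pos_nonneg one_le_power)
    then have "exp (- x) / ((x + 1)\<^sup>2 + y\<^sup>2) * x powr \<alpha> \<le> exp (- x) / (1 + y\<^sup>2) * x powr \<alpha>"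
      by (rule mult_right_mono) simp
    also have "\<dots> = 1 / (1 + y\<^sup>2) * (x powr \<alpha> / exp x)"
      by (simp add: exp_minus field_simps)
    finally show ?thesis
      using True by (simp add: P_def Q_def norm_damped_cauchy_kernel_sq ennreal_mult[symmetric] ennreal_leI)
  qed simp
  have Q_integral: "(\<integral>\<^sup>+x. Q x \<partial>lborel) = ennreal (Gamma (\<alpha> + 1))"
    unfolding Q_def using Gamma_conv_nn_integral_real[of "\<alpha> + 1"] assms by simp
  have "bergman_sqnorm \<alpha> damped_cauchy_kernel \<le> ennreal (1/pi) * (\<integral>\<^sup>+y. \<integral>\<^sup>+x. P y * Q x \<partial>lborel \<partial>lborel)"
    unfolding bergman_sqnorm_def by (intro mult_left_mono nn_integral_mono bound) auto
  also have "\<dots> = ennreal (1/pi) * ((\<integral>\<^sup>+y. P y \<partial>lborel) * ennreal (Gamma (\<alpha> + 1)))"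
  proof -
    have "Q \<in> borel_measurable lborel" "P \<in> borel_measurable lborel"
      unfolding P_def Q_def by measurable
    then show ?thesis
      by (simp add: nn_integral_cmult nn_integral_multc Q_integral)
  qed
  also have "\<dots> < \<infinity>"
    using nn_integral_inverse_1_plus_square_finite by (simp add: P_def ennreal_mult_less_top)
  finally show ?thesis .
qed

lemma bergman_sqnorm_damped_cauchy_kernel_nonzero:
  "bergman_sqnorm \<alpha> damped_cauchy_kernel \<noteq> 0"
proof -
  define c where "c = exp (-2) / 10 * min 1 (2 powr \<alpha>)"
  have "c > 0" by (simp add: c_def)
  have bound: "(ennreal c * indicator {0..1} y) * indicator {1..2} x
      \<le> indicator {0<..} x * ennreal ((cmod (damped_cauchy_kernel (Complex x y)))\<^sup>2 * x powr \<alpha>)"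
    for x y :: real
  proof (cases "x \<in> {1..2} \<and> y \<in> {0..1}")
    case True
    then have x: "1 \<le> x" "x \<le> 2" and y: "0 \<le> y" "y \<le> 1" by auto
    have "min 1 (2 powr \<alpha>) \<le> x powr \<alpha>"
    proof (cases "\<alpha> \<ge> 0")
      case True then show ?thesis using ge_one_powr_ge_zero[of x \<alpha>] x by linarith
    next
      case False then show ?thesis using x by (simp add: min_le_iff_disj powr_mono2')
    qed
    moreover have "exp (-2) / 10 \<le> exp (- x) / ((x + 1)\<^sup>2 + y\<^sup>2)"
    proof (rule frac_le)
      show "(x + 1)\<^sup>2 + y\<^sup>2 \<le> 10"
        using power_mono[of "x + 1" 3 2] power_le_one[of y 2] x y by simp
    qed (use x in \<open>auto simp: add_pos_nonneg\<close>)
    ultimately have "c \<le> exp (- x) / ((x + 1)\<^sup>2 + y\<^sup>2) * x powr \<alpha>"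
      unfolding c_def by (intro mult_mono) auto
    then show ?thesis
      using True by (simp add: norm_damped_cauchy_kernel_sq ennreal_leI)
  qed (auto simp: indicator_def)
  have "ennreal (1/pi) * ennreal c
      = ennreal (1/pi) * (\<integral>\<^sup>+y. \<integral>\<^sup>+x. (ennreal c * indicator {0..1::real} y) * indicator {1..2::real} x \<partial>lborel \<partial>lborel)"
    by (simp add: nn_integral_cmult_indicator)
  also have "\<dots> \<le> bergman_sqnorm \<alpha> damped_cauchy_kernel"
    unfolding bergman_sqnorm_def by (intro mult_left_mono nn_integral_mono bound) auto
  finally show ?thesis
    using \<open>c > 0\<close> by (auto simp: ennreal_mult[symmetric])
qed

lemma bergman_space_has_unit_vector:
  assumes "\<alpha> > -1"
  shows "\<exists>g\<in>bergman_space \<alpha>. bergman_norm \<alpha> g = 1"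
proof -
  let ?k = damped_cauchy_kernel
  have "bergman_norm \<alpha> ?k > 0"
    using bergman_sqnorm_damped_cauchy_kernel_finite[OF assms] bergman_sqnorm_damped_cauchy_kernel_nonzero[of \<alpha>]
    by (simp add: bergman_norm_def enn2real_positive_iff zero_less_iff_neq_zero)
  define c where "c = complex_of_real (1 / bergman_norm \<alpha> ?k)"
  have "c \<noteq> 0" and "cmod c * bergman_norm \<alpha> ?k = 1"
    using \<open>bergman_norm \<alpha> ?k > 0\<close> by (simp_all add: c_def norm_divide)
  then have "bergman_norm \<alpha> (\<lambda>z. c * ?k z) = 1"
    by (simp add: bergman_norm_cmult)
  moreover have "(\<lambda>z. c * ?k z) \<in> bergman_space \<alpha>"
    using \<open>c \<noteq> 0\<close> damped_cauchy_kernel_analytic bergman_sqnorm_damped_cauchy_kernel_finite[OF assms]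
    by (auto simp: bergman_space_def bergman_sqnorm_cmult ennreal_mult_less_top intro!: analytic_intros)
  ultimately show ?thesis by blast
qed

lemma powr_gt_one_iff_base_lt_one:
  fixes a e :: real
  assumes "a > 0" and "e < 0"
  shows "1 < a powr e \<longleftrightarrow> a < 1"
  using assms by (simp add: powr_def zero_less_mult_iff)

theorem mainTheorem5:
  fixes \<alpha> a :: real and b :: complex
  assumes "\<alpha> > -1" and "a > 0" and "Re b = 0"
  shows "(uniformly_expansive (bergman_space \<alpha>) (bergman_norm \<alpha>) (comp_op (\<lambda>w. of_real a * w + b))
            \<longleftrightarrow> expansive (bergman_space \<alpha>) (bergman_norm \<alpha>) (comp_op (\<lambda>w. of_real a * w + b)))
       \<and> (expansive (bergman_space \<alpha>) (bergman_norm \<alpha>) (comp_op (\<lambda>w. of_real a * w + b))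
            \<longleftrightarrow> a \<noteq> 1)"
proof -
  let ?e = "-(\<alpha>+2)/2"
  note scaling = bergman_comp_affine_scaling[OF \<open>a > 0\<close> \<open>Re b = 0\<close>]
    bergman_inv_comp_affine_scaling[OF \<open>a > 0\<close> \<open>Re b = 0\<close>]
  have "?e < 0" using \<open>\<alpha> > -1\<close> by simp
  then have scaling_gt_one_iff: "1 < a powr ?e \<or> 1 < (1/a) powr ?e \<longleftrightarrow> a \<noteq> 1"
    using \<open>a > 0\<close> by (auto simp: powr_gt_one_iff_base_lt_one)
  have "a \<noteq> 1" if "expansive (bergman_space \<alpha>) (bergman_norm \<alpha>) (comp_op (\<lambda>w. of_real a * w + b))"
    using scaling_gt_one_if_expansive[OF scaling _ _ bergman_space_has_unit_vector[OF \<open>\<alpha> > -1\<close>] that]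
      scaling_gt_one_iff by simp
  moreover have "uniformly_expansive (bergman_space \<alpha>) (bergman_norm \<alpha>) (comp_op (\<lambda>w. of_real a * w + b))"
    if "a \<noteq> 1"
    using uniformly_expansive_if_scaling_gt_one[OF scaling] scaling_gt_one_iff that by blast
  ultimately show ?thesis
    using uniformly_expansive_imp_expansive by blast
qed

end
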